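(* Fix $\varepsilon_0\ge0$ and $n\ge1$. (i) For every convex $f:[0,\infty)\to\mathbb R$ with $f(1)=0$, $$\sup_{d\ge2}\ \sup_{\rho\in\mathfrak M_d:\,W_\rho\ \varepsilon_0\text{-LDP}}\ \sup_{i\ne j}D_f\bigl(Q^{ij}_{1,n}\,\|\,Q^{ij}_{0,n}\bigr)=D_f\bigl(Q^{\mathrm{BRR}}_{1,n}\,\|\,Q^{\mathrm{BRR}}_{0,n}\bigr).$$ (ii) For every $\alpha\ge1$, $$\sup_{d\ge2}\ \sup_{\rho\in\mathfrak M_d:\,W_\rho\ \varepsilon_0\text{-LDP}}\ \sup_{i\ne j}H_\alpha\bigl(Q^{ij}_{1,n},Q^{ij}_{0,n}\bigr)=H_\alpha\bigl(Q^{\mathrm{BRR}}_{1,n},Q^{\mathrm{BRR}}_{0,n}\bigr)$$ and $$\sup_{d\ge2}\ \sup_{\rho\in\mathfrak M_d:\,W_\rho\ \varepsilon_0\text{-LDP}}\ \sup_{i\ne j}H_\alpha\bigl(Q^{ij}_{0,n},Q^{ij}_{1,n}\bigr)=H_\alpha\bigl(Q^{\mathrm{BRR}}_{0,n},Q^{\mathrm{BRR}}_{1,n}\bigr).$$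
   Context: For each integer $d\ge 2$: let $H\in\mathbb R^{d\times(d-1)}$ have orthonormal columns spanning $\{u\in\mathbb R^d:\mathbf 1^\top u=0\}$, set $\gamma_i:=H^\top e_i$ ($i\in[d]$), $\mathcal X_d:=\{x\in\mathbb R^{d-1}:1+\gamma_i^\top x\ge0\ \forall i\}$. An anchored law is a Borel probability measure $\rho$ on $\mathcal X_d$ with $\int x\,\rho(dx)=0$; $\mathfrak M_d$ is the set of anchored laws, and $W_\rho(B\mid i):=\int_B(1+\gamma_i^\top x)\rho(dx)$ is the associated channel from $[d]$ to $\mathcal X_d$. A channel $W$ is $\varepsilon_0$-LDP if $W(B\mid j)\le e^{\varepsilon_0}W(B\mid i)$ for all measurable $B$ and all input pairs $i,j$. For a channel $W$, inputs $i\ne j$ and $n\ge1$, the shuffled neighboring pair is $Q^{ij}_{0,n}:=W(\cdot\mid i)^{\otimes n}$ and $Q^{ij}_{1,n}:=\frac1n\sum_{m=1}^n W(\cdot\mid i)^{\otimes(m-1)}\otimes W(\cdot\mid j)\otimes W(\cdot\mid i)^{\otimes(n-m)}$ (here with $W=W_\rho$). Binary randomized response (BRR) with parameter $\varepsilon_0$ is the channel on $\{1,2\}$ with $W(1\mid1)=W(2\mid2)=e^{\varepsilon_0}/(1+e^{\varepsilon_0})$, $W(2\mid1)=W(1\mid2)=1/(1+e^{\varepsilon_0})$, and $Q^{\mathrm{BRR}}_{0,n},Q^{\mathrm{BRR}}_{1,n}$ denote its pair with $(i,j)=(1,2)$. For $P\ll Q$ and convex $f$ with $f(1)=0$, $D_f(P\|Q):=\int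 f(dP/dQ)\,dQ$; for $\alpha\ge1$, $H_\alpha(P,Q):=\int(dP/dQ-\alpha)_+\,dQ$. *)

theory Defs
  imports "HOL-Probability.Probability"
begin

text \<open>Vectors in R^m are functions nat => real, restricted to the index set {..<m}
  (measurable space PiM {..<m} (lambda _. borel)). The matrix H (d x (d-1)) is a function
  H i k, i < d (row), k < d-1 (column). Inputs [d] are {..<d} (0-based).\<close>

definition valid_H :: "nat \<Rightarrow> (nat \<Rightarrow> nat \<Rightarrow> real) \<Rightarrow> bool" where
  "valid_H d H \<longleftrightarrow>
     (\<forall>k<d-1. \<forall>l<d-1. (\<Sum>i<d. H i k * H i l) = (if k = l then 1 else 0)) \<and>
     {u :: nat \<Rightarrow> real. (\<forall>i\<ge>d. u i = 0) \<and> (\<Sum>i<d. u i) = 0}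
       = {(\<lambda>i. if i < d then (\<Sum>k<d-1. c k * H i k) else 0) | c. True}"

text \<open>gamma_i^T x = (H^T e_i)^T x\<close>
definition gam_dot :: "nat \<Rightarrow> (nat \<Rightarrow> nat \<Rightarrow> real) \<Rightarrow> nat \<Rightarrow> (nat \<Rightarrow> real) \<Rightarrow> real" where
  "gam_dot d H i x = (\<Sum>k<d-1. H i k * x k)"

definition Xset :: "nat \<Rightarrow> (nat \<Rightarrow> nat \<Rightarrow> real) \<Rightarrow> (nat \<Rightarrow> real) set" where
  "Xset d H = {x \<in> space (PiM {..<d-1} (\<lambda>_. borel :: real measure)).
                 \<forall>i<d. 1 + gam_dot d H i x \<ge> 0}"

definition anchored :: "nat \<Rightarrow> (nat \<Rightarrow> nat \<Rightarrow> real) \<Rightarrow> (nat \<Rightarrow> real) measure \<Rightarrow> bool" where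
  "anchored d H \<rho> \<longleftrightarrow>
     prob_space \<rho> \<and> sets \<rho> = sets (PiM {..<d-1} (\<lambda>_. borel :: real measure)) \<and>
     (AE x in \<rho>. x \<in> Xset d H) \<and>
     (\<forall>k<d-1. integrable \<rho> (\<lambda>x. x k) \<and> (\<integral>x. x k \<partial>\<rho>) = 0)"

definition Wrho :: "nat \<Rightarrow> (nat \<Rightarrow> nat \<Rightarrow> real) \<Rightarrow> (nat \<Rightarrow> real) measure \<Rightarrow> nat \<Rightarrow> (nat \<Rightarrow> real) measure" where
  "Wrho d H \<rho> i = density \<rho> (\<lambda>x. ennreal (1 + gam_dot d H i x))"

definition is_LDP :: "real \<Rightarrow> 'i set \<Rightarrow> ('i \<Rightarrow> 'y measure) \<Rightarrow> bool" where
  "is_LDP \<epsilon>0 I W \<longleftrightarrow>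
     (\<forall>i\<in>I. \<forall>j\<in>I. \<forall>B\<in>sets (W i). emeasure (W j) B \<le> ennreal (exp \<epsilon>0) * emeasure (W i) B)"

definition avg_measure :: "nat \<Rightarrow> (nat \<Rightarrow> 'a measure) \<Rightarrow> 'a measure" where
  "avg_measure n M = measure_of (space (M 0)) (sets (M 0))
      (\<lambda>A. (\<Sum>m<n. emeasure (M m) A) / of_nat n)"

definition Qzero :: "('i \<Rightarrow> 'y measure) \<Rightarrow> 'i \<Rightarrow> nat \<Rightarrow> (nat \<Rightarrow> 'y) measure" where
  "Qzero W i n = PiM {..<n} (\<lambda>_. W i)"

definition Qone :: "('i \<Rightarrow> 'y measure) \<Rightarrow> 'i \<Rightarrow> 'i \<Rightarrow> nat \<Rightarrow> (nat \<Rightarrow> 'y) measure" where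
  "Qone W i j n = avg_measure n (\<lambda>m. PiM {..<n} (\<lambda>k. if k = m then W j else W i))"

definition fdiv :: "(real \<Rightarrow> real) \<Rightarrow> 'a measure \<Rightarrow> 'a measure \<Rightarrow> real" where
  "fdiv f P Q = (\<integral>x. f (enn2real (RN_deriv Q P x)) \<partial>Q)"

definition hockey :: "real \<Rightarrow> 'a measure \<Rightarrow> 'a measure \<Rightarrow> real" where
  "hockey \<alpha> P Q = (\<integral>x. max 0 (enn2real (RN_deriv Q P x) - \<alpha>) \<partial>Q)"

text \<open>Binary randomized response: inputs 0 ("1") and 1 ("2"), outputs True ("1") / False ("2").\<close>
definition BRR :: "real \<Rightarrow> nat \<Rightarrow> bool measure" where
  "BRR \<epsilon>0 i = measure_pmf (bernoulli_pmf
      (if i = 0 then exp \<epsilon>0 / (1 + exp \<epsilon>0) else 1 / (1 + exp \<epsilon>0)))"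

definition admissible :: "(nat \<Rightarrow> nat \<Rightarrow> nat \<Rightarrow> real) \<Rightarrow> real \<Rightarrow>
    (nat \<times> (nat \<Rightarrow> real) measure \<times> nat \<times> nat) set" where
  "admissible HH \<epsilon>0 = {(d, \<rho>, i, j). 2 \<le> d \<and> anchored d (HH d) \<rho> \<and>
       is_LDP \<epsilon>0 {..<d} (Wrho d (HH d) \<rho>) \<and> i < d \<and> j < d \<and> i \<noteq> j}"

end

theory Submission
  imports Defs
begin

text \<open>Write \<open>\<theta> = exp \<epsilon>\<^sub>0\<close>. For an \<open>\<epsilon>\<^sub>0\<close>-LDP channel the likelihood ratio
  \<open>r = dW(\<cdot>|j) / dW(\<cdot>|i)\<close> takes values in \<open>[1/\<theta>, \<theta>]\<close> and has mean 1 under \<open>W(\<cdot>|i)\<close>,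
  and \<open>dQ\<^sub>1/dQ\<^sub>0\<close> is the average of \<open>r\<close> over the \<open>n\<close> coordinates. Hence every f-divergence
  of the shuffled pair is \<open>E f((r(z\<^sub>1) + \<dots> + r(z\<^sub>n))/n)\<close> for i.i.d. \<open>z\<^sub>m\<close>. Since a convex
  function lies below its secant between \<open>1/\<theta>\<close> and \<open>\<theta>\<close>, and the integral of the secant only
  depends on the mean of \<open>r\<close>, replacing the coordinates one at a time by the two-point
  variable on \<open>{1/\<theta>, \<theta>}\<close> with mean 1 can only increase this expectation. That two-point
  variable is the likelihood ratio of binary randomized response, and it is also realised by an
  anchored law in dimension 2, so the supremum is attained. The reversed hockey-stick
  divergence \<open>H\<^sub>\<alpha>(Q\<^sub>0, Q\<^sub>1)\<close> is the f-divergence of \<open>(Q\<^sub>1, Q\<^sub>0)\<close> for the convex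
  \<open>f(t) = max 0 (1 - \<alpha> t)\<close>, so it is covered as well.\<close>

section \<open>Convex functions and secants\<close>

lemma one_div_le_self: "1 \<le> x \<Longrightarrow> 1 / x \<le> (x :: real)"
  by (rule order_trans[of _ 1]) simp_all

lemma convex_on_max0_affine:
  fixes a b :: real
  assumes "convex S"
  shows "convex_on S (\<lambda>t. max 0 (a * t + b))"
proof (rule convex_onI)
  fix t x y :: real assume t: "0 < t" "t < 1"
  have "a * ((1 - t) *\<^sub>R x + t *\<^sub>R y) + b = (1 - t) * (a * x + b) + t * (a * y + b)"
    by (simp add: algebra_simps)
  moreover have "(1 - t) * (a * x + b) \<le> (1 - t) * max 0 (a * x + b)"
    and "t * (a * y + b) \<le> t * max 0 (a * y + b)"
    using t by (intro mult_left_mono; simp)+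
  moreover have "0 \<le> (1 - t) * max 0 (a * x + b) + t * max 0 (a * y + b)"
    using t by simp
  ultimately show "max 0 (a * ((1 - t) *\<^sub>R x + t *\<^sub>R y) + b)
      \<le> (1 - t) * max 0 (a * x + b) + t * max 0 (a * y + b)"
    by linarith
qed (fact assms)

lemma convex_on_divide_const:
  fixes g :: "real \<Rightarrow> real"
  assumes g: "convex_on {0..} g" and c: "0 < c"
  shows "convex_on {0..} (\<lambda>t. g (t / c))"
proof (rule convex_onI)
  fix t x y :: real assume t: "0 < t" "t < 1" and "x \<in> {0..}" "y \<in> {0..}"
  then show "g (((1 - t) *\<^sub>R x + t *\<^sub>R y) / c) \<le> (1 - t) * g (x / c) + t * g (y / c)"
    using c convex_onD[OF g, of t "x / c" "y / c"] by (simp add: add_divide_distrib)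
qed simp

lemma borel_measurable_convex_comp:
  fixes G :: "real \<Rightarrow> real"
  assumes G: "convex_on {0..} G" and F: "F \<in> borel_measurable M"
    and F_nonneg: "\<And>y. y \<in> space M \<Longrightarrow> 0 \<le> F y"
  shows "(\<lambda>y. G (F y)) \<in> borel_measurable M"
proof -
  define X where "X y = (if F y = 0 then 1 else F y)" for y
  have "(\<lambda>y. G (X y)) \<in> borel_measurable M"
  proof (rule convex_measurable[where X = X and q = G and A = "{0<..}"])
    show "X \<in> borel_measurable M" unfolding X_def using F by measurable
    show "X ` space M \<subseteq> {0<..}" using F_nonneg by (force simp: X_def)
    show "convex_on {0<..} G" by (rule convex_on_subset[OF G]) auto
  qed simp
  then have "(\<lambda>y. if F y = 0 then G 0 else G (X y)) \<in> borel_measurable M"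
    using F by (intro measurable_If) auto
  then show ?thesis
    by (rule measurable_cong[THEN iffD1, rotated]) (simp add: X_def)
qed

lemma integrable_convex_comp:
  fixes G :: "real \<Rightarrow> real"
  assumes M: "finite_measure M" and G: "convex_on {0..} G" and F: "F \<in> borel_measurable M"
    and lo: "0 < lo" and F_range: "\<And>y. y \<in> space M \<Longrightarrow> F y \<in> {lo..hi}"
  shows "integrable M (\<lambda>y. G (F y))"
proof -
  have "continuous_on {lo..hi} G"
    using lo by (intro convex_on_continuous[of "{0<..}"] convex_on_subset[OF G]
        continuous_on_subset[of "{0<..}"]) auto
  then have "bounded (G ` {lo..hi})"
    by (intro compact_imp_bounded compact_continuous_image compact_Icc)
  then obtain B where B: "\<And>x. x \<in> {lo..hi} \<Longrightarrow> norm (G x) \<le> B"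
    unfolding bounded_iff by blast
  show ?thesis
  proof (rule finite_measure.integrable_const_bound[OF M])
    show "AE y in M. norm (G (F y)) \<le> B"
      using B F_range by (intro AE_I2) auto
    show "(\<lambda>y. G (F y)) \<in> borel_measurable M"
      using F F_range lo by (intro borel_measurable_convex_comp[OF G]) force+
  qed
qed

text \<open>For \<open>u = v\<close> (below: \<open>\<theta> = 1\<close>) the junk value \<open>x / 0 = 0\<close> makes \<open>secant G u u\<close> the
  constant \<open>G u\<close>.\<close>

definition secant :: "(real \<Rightarrow> real) \<Rightarrow> real \<Rightarrow> real \<Rightarrow> real \<Rightarrow> real" where
  "secant G u v x = (G v - G u) / (v - u) * (x - u) + G u"

lemma convex_on_le_secant:
  assumes "convex_on S G" "{u..v} \<subseteq> S" "x \<in> {u..v}"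
  shows "G x \<le> secant G u v x"
  using convex_onD_Icc'[OF convex_on_subset[OF assms(1,2) convex_real_interval(5)] assms(3)]
  by (simp add: secant_def)

lemma secant_endpoint: "x = u \<or> x = v \<Longrightarrow> secant G u v x = G x"
  by (auto simp: secant_def)

lemma abs_secant_le:
  assumes "x \<in> {u..v}"
  shows "\<bar>secant G u v x\<bar> \<le> \<bar>G u\<bar> + \<bar>G v\<bar>"
proof (cases "u = v")
  case False
  define t where "t = (x - u) / (v - u)"
  have t: "0 \<le> t" "t \<le> 1" using assms False by (auto simp: t_def field_split_simps)
  have "secant G u v x = (G v - G u) * t + G u"
    by (simp add: secant_def t_def)
  also have "\<dots> = t * G v + (1 - t) * G u"
    by (simp add: algebra_simps)
  also have "\<bar>\<dots>\<bar> \<le> \<bar>t * G v\<bar> + \<bar>(1 - t) * G u\<bar>"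
    by (rule abs_triangle_ineq)
  also have "\<dots> = t * \<bar>G v\<bar> + (1 - t) * \<bar>G u\<bar>"
    using t by (simp add: abs_mult)
  also have "\<dots> \<le> \<bar>G u\<bar> + \<bar>G v\<bar>"
    using mult_left_le_one_le[of "\<bar>G v\<bar>" t] mult_left_le_one_le[of "\<bar>G u\<bar>" "1 - t"] t
    by auto
  finally show ?thesis .
qed (simp add: secant_def)

lemma secant_add: "secant G u v (a + x) = secant G u v a + (G v - G u) / (v - u) * x"
proof -
  define s where "s = (G v - G u) / (v - u)"
  show ?thesis unfolding secant_def s_def[symmetric] by (simp add: algebra_simps)
qed

lemma secant_at_mean:
  fixes \<theta> :: real
  assumes "1 \<le> \<theta>"
  shows "secant G (a + 1/\<theta>) (a + \<theta>) (a + 1) = \<theta> / (1 + \<theta>) * G (a + 1/\<theta>) + 1 / (1 + \<theta>) * G (a + \<theta>)"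
proof (cases "\<theta> = 1")
  case False
  then have "1 < \<theta>" using assms by simp
  then have "\<theta> * \<theta> \<noteq> 1"
    using less_1_mult[OF \<open>1 < \<theta>\<close> \<open>1 < \<theta>\<close>] by simp
  then have slope: "(1 - 1/\<theta>) / (\<theta> - 1/\<theta>) = 1 / (1 + \<theta>)"
    using \<open>1 < \<theta>\<close> by (simp add: field_simps)
  have weight: "\<theta> / (1 + \<theta>) = 1 - 1 / (1 + \<theta>)"
    using assms by (simp add: field_simps)
  have affine: "(y - x) * c + x = (1 - c) * x + c * y" for x y c :: real
    by (simp add: algebra_simps)
  have "secant G (a + 1/\<theta>) (a + \<theta>) (a + 1)
      = (G (a + \<theta>) - G (a + 1/\<theta>)) * ((1 - 1/\<theta>) / (\<theta> - 1/\<theta>)) + G (a + 1/\<theta>)"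
    unfolding secant_def by simp
  then show ?thesis
    unfolding slope weight affine .
qed (simp add: secant_def)

section \<open>Densities, products and divergences\<close>

lemma AE_le_of_set_nn_integral_le:
  assumes [measurable]: "f \<in> borel_measurable M" "g \<in> borel_measurable M"
    and fin: "(\<integral>\<^sup>+x. f x \<partial>M) \<noteq> \<infinity>"
    and le: "\<And>A. A \<in> sets M \<Longrightarrow> (\<integral>\<^sup>+x\<in>A. g x \<partial>M) \<le> (\<integral>\<^sup>+x\<in>A. f x \<partial>M)"
  shows "AE x in M. g x \<le> f x"
proof (rule ccontr)
  define N where "N = {x \<in> space M. f x < g x}"
  have N: "N \<in> sets M" unfolding N_def by measurable
  assume not_AE: "\<not> (AE x in M. g x \<le> f x)"
  have "(\<integral>\<^sup>+x\<in>N. f x \<partial>M) < (\<integral>\<^sup>+x\<in>N. g x \<partial>M)"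
  proof (rule nn_integral_less)
    have "(\<integral>\<^sup>+x\<in>N. f x \<partial>M) \<le> (\<integral>\<^sup>+x. f x \<partial>M)"
      by (intro nn_integral_mono) (simp add: indicator_def)
    then show "(\<integral>\<^sup>+x\<in>N. f x \<partial>M) \<noteq> \<infinity>"
      using fin by (auto simp: top_unique)
    show "AE x in M. f x * indicator N x \<le> g x * indicator N x"
      by (intro AE_I2) (simp add: N_def indicator_def less_imp_le)
    show "\<not> (AE x in M. g x * indicator N x \<le> f x * indicator N x)"
    proof
      assume "AE x in M. g x * indicator N x \<le> f x * indicator N x"
      with AE_space have "AE x in M. g x \<le> f x"
        by eventually_elim (force simp: N_def not_less[symmetric])
      with not_AE show False ..
    qed
  qed (use N in measurable)
  with le[OF N] show False by simp
qed

lemma AE_density_le_const: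
  assumes M: "finite_measure M" and q [measurable]: "q \<in> borel_measurable M"
    and le: "\<And>A. A \<in> sets M \<Longrightarrow> emeasure (density M q) A \<le> ennreal c * emeasure M A"
  shows "AE x in M. q x \<le> ennreal c"
proof (rule AE_le_of_set_nn_integral_le)
  show "(\<integral>\<^sup>+x. ennreal c \<partial>M) \<noteq> \<infinity>"
    using finite_measure.emeasure_finite[OF M] by (simp add: ennreal_mult_eq_top_iff)
  fix A assume A: "A \<in> sets M"
  show "(\<integral>\<^sup>+x\<in>A. q x \<partial>M) \<le> (\<integral>\<^sup>+x\<in>A. ennreal c \<partial>M)"
    using le[OF A] A by (simp add: emeasure_density nn_integral_cmult_indicator)
qed simp_all

lemma AE_const_le_density:
  assumes N: "finite_measure (density M q)" and q [measurable]: "q \<in> borel_measurable M"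
    and le: "\<And>A. A \<in> sets M \<Longrightarrow> emeasure M A \<le> ennreal c * emeasure (density M q) A"
  shows "AE x in M. 1 \<le> ennreal c * q x"
proof (rule AE_le_of_set_nn_integral_le)
  have "emeasure (density M q) (space M) = (\<integral>\<^sup>+x. q x \<partial>M)"
    by (subst emeasure_density) (auto intro!: nn_integral_cong)
  then show "(\<integral>\<^sup>+x. ennreal c * q x \<partial>M) \<noteq> \<infinity>"
    using finite_measure.emeasure_finite[OF N, of "space M"]
    by (simp add: nn_integral_cmult ennreal_mult_eq_top_iff)
  fix A assume A: "A \<in> sets M"
  show "(\<integral>\<^sup>+x\<in>A. 1 \<partial>M) \<le> (\<integral>\<^sup>+x\<in>A. ennreal c * q x \<partial>M)"
    using le[OF A] A by (simp add: emeasure_density nn_integral_cmult mult.assoc)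
qed simp_all

lemma PiM_density:
  fixes f :: "'i \<Rightarrow> 'a \<Rightarrow> ennreal"
  assumes I: "finite I" and M: "sigma_finite_measure M"
    and f [measurable]: "\<And>i. f i \<in> borel_measurable M"
    and density_sigma_finite: "\<And>i. sigma_finite_measure (density M (f i))"
  shows "PiM I (\<lambda>i. density M (f i)) = density (PiM I (\<lambda>_. M)) (\<lambda>x. \<Prod>i\<in>I. f i (x i))"
proof -
  interpret D: product_sigma_finite "\<lambda>i. density M (f i)"
    using density_sigma_finite by (simp add: product_sigma_finite_def)
  interpret M: product_sigma_finite "\<lambda>_. M"
    using M by (simp add: product_sigma_finite_def)
  have [measurable]: "(\<lambda>x. \<Prod>i\<in>I. f i (x i)) \<in> borel_measurable (PiM I (\<lambda>_. M))"
    by measurable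
  show ?thesis
  proof (rule D.PiM_eqI[OF I, symmetric])
    show "sets (density (PiM I (\<lambda>_. M)) (\<lambda>x. \<Prod>i\<in>I. f i (x i))) = sets (PiM I (\<lambda>i. density M (f i)))"
      by (simp cong: sets_PiM_cong)
  next
    fix A assume A: "\<And>i. i \<in> I \<Longrightarrow> A i \<in> sets (density M (f i))"
    then have A' [measurable]: "\<And>i. i \<in> I \<Longrightarrow> A i \<in> sets M" by simp
    have box: "Pi\<^sub>E I A \<in> sets (PiM I (\<lambda>_. M))"
      using A' by (intro sets_PiM_I_finite I) auto
    have "emeasure (density (PiM I (\<lambda>_. M)) (\<lambda>x. \<Prod>i\<in>I. f i (x i))) (Pi\<^sub>E I A)
        = (\<integral>\<^sup>+x. (\<Prod>i\<in>I. f i (x i) * indicator (A i) (x i)) \<partial>PiM I (\<lambda>_. M))"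
    proof (subst emeasure_density[OF _ box], measurable, rule nn_integral_cong)
      fix x assume "x \<in> space (PiM I (\<lambda>_. M))"
      then have "x \<in> Pi\<^sub>E I A \<longleftrightarrow> (\<forall>i\<in>I. x i \<in> A i)"
        by (auto simp: space_PiM PiE_def)
      then show "(\<Prod>i\<in>I. f i (x i)) * indicator (Pi\<^sub>E I A) x = (\<Prod>i\<in>I. f i (x i) * indicator (A i) (x i))"
        using I by (auto simp: prod.distrib indicator_def)
    qed
    also have "\<dots> = (\<Prod>i\<in>I. \<integral>\<^sup>+y. f i y * indicator (A i) y \<partial>M)"
      using A' by (intro M.product_nn_integral_prod I) measurable
    also have "\<dots> = (\<Prod>i\<in>I. emeasure (density M (f i)) (A i))"
      using A' by (simp add: emeasure_density)
    finally show "emeasure (density (PiM I (\<lambda>_. M)) (\<lambda>x. \<Prod>i\<in>I. f i (x i))) (Pi\<^sub>E I A)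
        = (\<Prod>i\<in>I. emeasure (density M (f i)) (A i))" .
  qed
qed

lemma avg_measure_density:
  fixes f :: "nat \<Rightarrow> 'a \<Rightarrow> ennreal"
  assumes n: "1 \<le> n" and density: "\<And>m. m < n \<Longrightarrow> N m = density M (f m)"
    and f [measurable]: "\<And>m. m < n \<Longrightarrow> f m \<in> borel_measurable M"
  shows "avg_measure n N = density M (\<lambda>x. (\<Sum>m<n. f m x) / of_nat n)"
proof -
  have space_N0: "space (N 0) = space M" "sets (N 0) = sets M"
    using density[of 0] n by auto
  have "avg_measure n N = measure_of (space M) (sets M) (\<lambda>A. (\<Sum>m<n. emeasure (N m) A) / of_nat n)"
    unfolding avg_measure_def space_N0 ..
  also have "\<dots> = measure_of (space M) (sets M) (emeasure (density M (\<lambda>x. (\<Sum>m<n. f m x) / of_nat n)))"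
  proof (rule measure_of_eq[OF sets.space_closed])
    fix A assume "A \<in> sigma_sets (space M) (sets M)"
    then have A [measurable]: "A \<in> sets M" by (simp add: sets.sigma_sets_eq)
    have "emeasure (density M (\<lambda>x. (\<Sum>m<n. f m x) / of_nat n)) A
        = (\<integral>\<^sup>+x. (\<Sum>m<n. f m x * indicator A x) / of_nat n \<partial>M)"
    proof (subst emeasure_density, measurable, rule nn_integral_cong)
      fix x
      have "(\<Sum>m<n. f m x) / of_nat n * indicator A x = ((\<Sum>m<n. f m x) * indicator A x) / of_nat n"
        by (simp only: divide_ennreal_def ac_simps)
      then show "(\<Sum>m<n. f m x) / of_nat n * indicator A x = (\<Sum>m<n. f m x * indicator A x) / of_nat n"
        by (simp only: sum_distrib_right)
    qed
    also have "\<dots> = (\<integral>\<^sup>+x. (\<Sum>m<n. f m x * indicator A x) \<partial>M) / of_nat n"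
      by (rule nn_integral_divide) measurable
    also have "\<dots> = (\<Sum>m<n. \<integral>\<^sup>+x. f m x * indicator A x \<partial>M) / of_nat n"
      by (subst nn_integral_sum) measurable
    also have "\<dots> = (\<Sum>m<n. emeasure (N m) A) / of_nat n"
      by (simp add: density emeasure_density)
    finally show "(\<Sum>m<n. emeasure (N m) A) / of_nat n = emeasure (density M (\<lambda>x. (\<Sum>m<n. f m x) / of_nat n)) A"
      by simp
  qed
  also have "\<dots> = density M (\<lambda>x. (\<Sum>m<n. f m x) / of_nat n)"
    using measure_of_of_measure[of "density M _"] by simp
  finally show ?thesis .
qed

lemma fdiv_density:
  fixes g :: "real \<Rightarrow> real"
  assumes M: "sigma_finite_measure M" and h: "h \<in> borel_measurable M"
    and h_nonneg: "\<And>x. x \<in> space M \<Longrightarrow> 0 \<le> h x" and g: "convex_on {0..} g"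
  shows "fdiv g (density M (\<lambda>x. ennreal (h x))) M = (\<integral>x. g (h x) \<partial>M)"
  unfolding fdiv_def
proof (rule integral_cong_AE)
  show "(\<lambda>x. g (enn2real (RN_deriv M (density M (\<lambda>x. ennreal (h x))) x))) \<in> borel_measurable M"
    by (rule borel_measurable_convex_comp[OF g]) auto
  show "(\<lambda>x. g (h x)) \<in> borel_measurable M"
    by (rule borel_measurable_convex_comp[OF g h h_nonneg])
  have "AE x in M. ennreal (h x) = RN_deriv M (density M (\<lambda>x. ennreal (h x))) x"
    using h by (intro sigma_finite_measure.RN_deriv_unique[OF M]) auto
  then show "AE x in M. g (enn2real (RN_deriv M (density M (\<lambda>x. ennreal (h x))) x)) = g (h x)"
    using AE_space by eventually_elim (metis enn2real_ennreal h_nonneg)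
qed

lemma hockey_eq_fdiv: "hockey \<alpha> P Q = fdiv (\<lambda>t. max 0 (t - \<alpha>)) P Q"
  by (simp add: hockey_def fdiv_def)

text \<open>The reversed hockey-stick divergence is again an f-divergence, for the convex
  perspective \<open>t * max 0 (1/t - \<alpha>) = max 0 (1 - \<alpha> * t)\<close>.\<close>

lemma hockey_density_swap:
  assumes M: "sigma_finite_measure M" and L [measurable]: "L \<in> borel_measurable M"
    and L_pos: "\<And>x. x \<in> space M \<Longrightarrow> 0 < L x"
  shows "hockey \<alpha> M (density M (\<lambda>x. ennreal (L x)))
    = fdiv (\<lambda>t. max 0 (1 - \<alpha> * t)) (density M (\<lambda>x. ennreal (L x))) M"
proof -
  have hinge: "convex_on {0..} (\<lambda>t. max 0 (1 - \<alpha> * t))"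
    using convex_on_max0_affine[of "{0..}" "- \<alpha>" 1] by simp
  let ?N = "density M (\<lambda>x. ennreal (L x))"
  have N: "sigma_finite_measure ?N"
    using sigma_finite_measure.sigma_finite_iff_density_finite[OF M] by simp
  have "density ?N (\<lambda>x. ennreal (1 / L x)) = density M (\<lambda>x. ennreal (L x) * ennreal (1 / L x))"
    by (rule density_density_eq) measurable
  also have "\<dots> = density M (\<lambda>_. 1)"
  proof (intro density_cong AE_I2)
    fix x assume "x \<in> space M"
    then have "0 < L x" by (rule L_pos)
    then show "ennreal (L x) * ennreal (1 / L x) = 1"
      by (simp flip: ennreal_mult)
  qed measurable
  finally have M_eq: "M = density ?N (\<lambda>x. ennreal (1 / L x))"
    by (simp add: density_1)
  have "hockey \<alpha> M ?N = (\<integral>x. max 0 (1 / L x - \<alpha>) \<partial>?N)"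
    unfolding hockey_eq_fdiv
    by (subst M_eq, rule fdiv_density[OF N])
       (use L_pos in \<open>auto intro: less_imp_le convex_on_max0_affine[of _ 1 "- \<alpha>", simplified]\<close>)
  also have "\<dots> = (\<integral>x. L x * max 0 (1 / L x - \<alpha>) \<partial>M)"
    using L_pos by (subst integral_density) (auto intro!: AE_I2 less_imp_le)
  also have "\<dots> = (\<integral>x. max 0 (1 - \<alpha> * L x) \<partial>M)"
  proof (rule Bochner_Integration.integral_cong[OF refl])
    fix x assume "x \<in> space M"
    then have "0 < L x" by (rule L_pos)
    then show "L x * max 0 (1 / L x - \<alpha>) = max 0 (1 - \<alpha> * L x)"
      by (simp add: max_mult_distrib_left right_diff_distrib mult.commute)
  qed
  also have "\<dots> = fdiv (\<lambda>t. max 0 (1 - \<alpha> * t)) ?N M"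
    by (rule fdiv_density[OF M L less_imp_le[OF L_pos] hinge, symmetric])
  finally show ?thesis .
qed

section \<open>Bounded likelihood ratios\<close>

text \<open>\<open>two_point_expectation \<theta> G n c\<close> is the expectation of \<open>G (c + R\<^sub>1 + \<dots> + R\<^sub>n)\<close> for i.i.d.
  \<open>R\<^sub>k\<close> equal to \<open>1/\<theta>\<close> with probability \<open>\<theta>/(1 + \<theta>)\<close> and to \<open>\<theta>\<close> with probability
  \<open>1/(1 + \<theta>)\<close>: the likelihood ratios of binary randomized response.\<close>

primrec two_point_expectation :: "real \<Rightarrow> (real \<Rightarrow> real) \<Rightarrow> nat \<Rightarrow> real \<Rightarrow> real" where
  "two_point_expectation \<theta> G 0 c = G c"
| "two_point_expectation \<theta> G (Suc n) c =
     \<theta> / (1 + \<theta>) * two_point_expectation \<theta> G n (c + 1/\<theta>) + 1 / (1 + \<theta>) * two_point_expectation \<theta> G n (c + \<theta>)"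

locale bounded_likelihood_ratio =
  fixes P Q :: "'a measure" and r :: "'a \<Rightarrow> real" and \<theta> :: real
  assumes prob_space_P: "prob_space P" and prob_space_Q: "prob_space Q"
    and Q_eq_density: "Q = density P (\<lambda>y. ennreal (r y))"
    and borel_measurable_ratio [measurable]: "r \<in> borel_measurable P"
    and ratio_ge: "\<And>y. y \<in> space P \<Longrightarrow> 1/\<theta> \<le> r y"
    and ratio_le: "\<And>y. y \<in> space P \<Longrightarrow> r y \<le> \<theta>"
    and one_le_\<theta>: "1 \<le> \<theta>"
begin

sublocale P: prob_space P
  by (fact prob_space_P)

lemma prob_space_PiM_P: "prob_space (PiM I (\<lambda>_. P))"
  by (intro prob_space_PiM prob_space_P)

lemma ratio_pos:
  assumes "y \<in> space P"
  shows "0 < r y"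
proof -
  have "0 < 1/\<theta>" using one_le_\<theta> by simp
  also have "\<dots> \<le> r y" by (rule ratio_ge[OF assms])
  finally show ?thesis .
qed

lemma integrable_ratio: "integrable P r"
  by (rule P.integrable_const_bound[where B = \<theta>])
     (use ratio_pos ratio_le in \<open>auto intro!: AE_I2 simp: less_imp_le\<close>)

lemma integral_ratio: "(\<integral>y. r y \<partial>P) = 1"
proof -
  have r_nonneg: "AE y in P. 0 \<le> r y"
    by (rule AE_I2) (rule less_imp_le[OF ratio_pos])
  have "ennreal 1 = emeasure Q (space Q)"
    using prob_space.emeasure_space_1[OF prob_space_Q] by simp
  also have "\<dots> = (\<integral>\<^sup>+y. ennreal (r y) * indicator (space P) y \<partial>P)"
    unfolding Q_eq_density by (subst emeasure_density) auto
  also have "\<dots> = (\<integral>\<^sup>+y. ennreal (r y) \<partial>P)"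
    by (rule nn_integral_cong) simp
  also have "\<dots> = ennreal (\<integral>y. r y \<partial>P)"
    by (rule nn_integral_eq_integral[OF integrable_ratio r_nonneg])
  finally show ?thesis
    using integral_nonneg_AE[OF r_nonneg] by simp
qed

lemma sum_ratio_bounds:
  assumes z: "z \<in> space (PiM J (\<lambda>_. P))" and K: "K \<subseteq> J"
  shows "real (card K) / \<theta> \<le> (\<Sum>m\<in>K. r (z m))" "(\<Sum>m\<in>K. r (z m)) \<le> real (card K) * \<theta>"
proof -
  have zK: "z m \<in> space P" if "m \<in> K" for m
    using z K that by (auto simp: space_PiM)
  show "real (card K) / \<theta> \<le> (\<Sum>m\<in>K. r (z m))"
    using sum_bounded_below[of K "1/\<theta>" "\<lambda>m. r (z m)"] zK ratio_ge by simp
  show "(\<Sum>m\<in>K. r (z m)) \<le> real (card K) * \<theta>"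
    using sum_bounded_above[of K "\<lambda>m. r (z m)" \<theta>] zK ratio_le by simp
qed

lemma borel_measurable_ratio_PiM:
  assumes "m \<in> I"
  shows "(\<lambda>z. r (z m)) \<in> borel_measurable (PiM I (\<lambda>_. P))"
  by (rule measurable_compose[OF measurable_component_singleton[of m I "\<lambda>_. P", OF assms] borel_measurable_ratio])

lemma integrable_convex_sum:
  assumes G: "convex_on {0..} G" and c: "0 \<le> c" and K: "K \<subseteq> J" and J: "finite J"
  shows "integrable (PiM J (\<lambda>_. P)) (\<lambda>z. G (c + (\<Sum>m\<in>K. r (z m))))"
proof -
  interpret PJ: prob_space "PiM J (\<lambda>_. P)"
    by (rule prob_space_PiM_P)
  have meas: "(\<lambda>z. c + (\<Sum>m\<in>K. r (z m))) \<in> borel_measurable (PiM J (\<lambda>_. P))"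
    using K by (intro borel_measurable_add borel_measurable_const borel_measurable_sum borel_measurable_ratio_PiM) auto
  show ?thesis
  proof (cases "K = {}")
    case False
    then have "0 < real (card K) / \<theta>"
      using K J one_le_\<theta> by (simp add: finite_subset card_gt_0_iff)
    then show ?thesis
      using c sum_ratio_bounds[OF _ K]
      by (intro integrable_convex_comp[OF PJ.finite_measure_axioms G meas,
            where lo = "c + real (card K) / \<theta>" and hi = "c + real (card K) * \<theta>"]) auto
  qed simp
qed

lemma integral_secant_ratio: "(\<integral>y. secant G u v (a + r y) \<partial>P) = secant G u v (a + 1)"
proof -
  define s where "s = (G v - G u) / (v - u)"
  have "(\<integral>y. secant G u v (a + r y) \<partial>P) = (\<integral>y. secant G u v a + s * r y \<partial>P)"
    by (simp only: secant_add s_def)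
  also have "\<dots> = secant G u v a + s * (\<integral>y. r y \<partial>P)"
    using integrable_ratio by (simp add: P.prob_space)
  also have "\<dots> = secant G u v (a + 1)"
    by (simp add: integral_ratio secant_add s_def)
  finally show ?thesis .
qed

lemma integrable_secant_step:
  fixes n :: nat
  assumes G: "convex_on {0..} G" and c: "0 \<le> c"
  defines "S \<equiv> \<lambda>z. c + (\<Sum>m<n. r (z m))"
  shows "integrable (PiM {..<Suc n} (\<lambda>_. P)) (\<lambda>z. secant G (S z + 1/\<theta>) (S z + \<theta>) (S z + r (z n)))"
proof (rule Bochner_Integration.integrable_bound)
  let ?PS = "PiM {..<Suc n} (\<lambda>_. P)"
  have G_int: "integrable ?PS (\<lambda>z. G (S z + b))" if "0 \<le> b" for b
    using integrable_convex_sum[OF G, of "c + b" "{..<n}" "{..<Suc n}"] c that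
    by (simp add: S_def ac_simps)
  have [measurable]: "(\<lambda>z. G (S z + 1/\<theta>)) \<in> borel_measurable ?PS" "(\<lambda>z. G (S z + \<theta>)) \<in> borel_measurable ?PS"
    using G_int one_le_\<theta> by auto
  have [measurable]: "(\<lambda>z. r (z n)) \<in> borel_measurable ?PS" "S \<in> borel_measurable ?PS"
    unfolding S_def
    by (auto intro!: borel_measurable_add borel_measurable_const borel_measurable_sum borel_measurable_ratio_PiM)
  show "integrable ?PS (\<lambda>z. \<bar>G (S z + 1/\<theta>)\<bar> + \<bar>G (S z + \<theta>)\<bar>)"
    using G_int one_le_\<theta> by auto
  show "(\<lambda>z. secant G (S z + 1/\<theta>) (S z + \<theta>) (S z + r (z n))) \<in> borel_measurable ?PS"
    unfolding secant_def by measurable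
  show "AE z in ?PS. norm (secant G (S z + 1/\<theta>) (S z + \<theta>) (S z + r (z n)))
      \<le> norm (\<bar>G (S z + 1/\<theta>)\<bar> + \<bar>G (S z + \<theta>)\<bar>)"
  proof (rule AE_I2)
    fix z assume "z \<in> space ?PS"
    then have "z n \<in> space P" by (auto simp: space_PiM)
    then show "norm (secant G (S z + 1/\<theta>) (S z + \<theta>) (S z + r (z n)))
        \<le> norm (\<bar>G (S z + 1/\<theta>)\<bar> + \<bar>G (S z + \<theta>)\<bar>)"
      using abs_secant_le[of "S z + r (z n)"] ratio_ge ratio_le by simp
  qed
qed

lemma integral_secant_step:
  fixes n :: nat
  assumes G: "convex_on {0..} G" and c: "0 \<le> c"
  defines "S \<equiv> \<lambda>z. c + (\<Sum>m<n. r (z m))"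
  shows "(\<integral>z. secant G (S z + 1/\<theta>) (S z + \<theta>) (S z + r (z n)) \<partial>PiM {..<Suc n} (\<lambda>_. P))
    = \<theta> / (1 + \<theta>) * (\<integral>z. G (S z + 1/\<theta>) \<partial>PiM {..<n} (\<lambda>_. P))
      + 1 / (1 + \<theta>) * (\<integral>z. G (S z + \<theta>) \<partial>PiM {..<n} (\<lambda>_. P))"
proof -
  interpret product_sigma_finite "\<lambda>_::nat. P"
    by (simp add: product_sigma_finite_def P.sigma_finite_measure_axioms)
  let ?Pn = "PiM {..<n} (\<lambda>_. P)"
  have G_int: "integrable ?Pn (\<lambda>z. G (S z + b))" if "0 \<le> b" for b
    using integrable_convex_sum[OF G, of "c + b" "{..<n}" "{..<n}"] c that
    by (simp add: S_def ac_simps)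
  have S_upd: "S (x(n := y)) = S x" for x y
    by (simp add: S_def)
  have "(\<integral>z. secant G (S z + 1/\<theta>) (S z + \<theta>) (S z + r (z n)) \<partial>PiM {..<Suc n} (\<lambda>_. P))
      = (\<integral>x. (\<integral>y. secant G (S x + 1/\<theta>) (S x + \<theta>) (S x + r y) \<partial>P) \<partial>?Pn)"
  proof -
    have "integrable (PiM (insert n {..<n}) (\<lambda>_. P)) (\<lambda>z. secant G (S z + 1/\<theta>) (S z + \<theta>) (S z + r (z n)))"
      using integrable_secant_step[OF G c, of n] by (simp add: lessThan_Suc S_def)
    then show ?thesis
      unfolding lessThan_Suc by (simp add: product_integral_insert S_upd)
  qed
  also have "\<dots> = (\<integral>x. \<theta> / (1 + \<theta>) * G (S x + 1/\<theta>) + 1 / (1 + \<theta>) * G (S x + \<theta>) \<partial>?Pn)"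
    by (simp add: integral_secant_ratio secant_at_mean[OF one_le_\<theta>])
  also have "\<dots> = \<theta> / (1 + \<theta>) * (\<integral>x. G (S x + 1/\<theta>) \<partial>?Pn) + 1 / (1 + \<theta>) * (\<integral>x. G (S x + \<theta>) \<partial>?Pn)"
    using G_int one_le_\<theta> by simp
  finally show ?thesis .
qed

lemma integral_convex_sum_le:
  assumes G: "convex_on {0..} G" and c: "0 \<le> c"
  shows "(\<integral>z. G (c + (\<Sum>m<n. r (z m))) \<partial>PiM {..<n} (\<lambda>_. P)) \<le> two_point_expectation \<theta> G n c"
  using c
proof (induction n arbitrary: c)
  case 0
  show ?case
    using prob_space.prob_space[OF prob_space_PiM_P[where I = "{} :: nat set"]] by simp
next
  case (Suc n)
  let ?PS = "PiM {..<Suc n} (\<lambda>_. P)"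
  define S where "S z = c + (\<Sum>m<n. r (z m))" for z
  have "(\<integral>z. G (c + (\<Sum>m<Suc n. r (z m))) \<partial>?PS) = (\<integral>z. G (S z + r (z n)) \<partial>?PS)"
    by (simp add: S_def add.assoc)
  also have "\<dots> \<le> (\<integral>z. secant G (S z + 1/\<theta>) (S z + \<theta>) (S z + r (z n)) \<partial>?PS)"
  proof (rule integral_mono)
    show "integrable ?PS (\<lambda>z. G (S z + r (z n)))"
      using integrable_convex_sum[OF G Suc.prems, of "{..<Suc n}" "{..<Suc n}"]
      by (simp add: S_def add.assoc)
    show "integrable ?PS (\<lambda>z. secant G (S z + 1/\<theta>) (S z + \<theta>) (S z + r (z n)))"
      unfolding S_def by (rule integrable_secant_step[OF G Suc.prems])
    fix z assume z: "z \<in> space ?PS"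
    then have "z n \<in> space P" by (auto simp: space_PiM)
    moreover have "0 \<le> real n / \<theta>"
      using one_le_\<theta> by simp
    then have "0 \<le> S z"
      using Suc.prems sum_ratio_bounds(1)[OF z, of "{..<n}"] by (simp add: S_def)
    ultimately show "G (S z + r (z n)) \<le> secant G (S z + 1/\<theta>) (S z + \<theta>) (S z + r (z n))"
      using ratio_ge ratio_le one_le_\<theta> by (intro convex_on_le_secant[OF G]) auto
  qed
  also have "\<dots> = \<theta> / (1 + \<theta>) * (\<integral>z. G (c + 1/\<theta> + (\<Sum>m<n. r (z m))) \<partial>PiM {..<n} (\<lambda>_. P))
      + 1 / (1 + \<theta>) * (\<integral>z. G (c + \<theta> + (\<Sum>m<n. r (z m))) \<partial>PiM {..<n} (\<lambda>_. P))"
    using integral_secant_step[OF G Suc.prems, of n] by (simp add: S_def ac_simps)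
  also have "\<dots> \<le> \<theta> / (1 + \<theta>) * two_point_expectation \<theta> G n (c + 1/\<theta>)
      + 1 / (1 + \<theta>) * two_point_expectation \<theta> G n (c + \<theta>)"
    using Suc.IH[of "c + 1/\<theta>"] Suc.IH[of "c + \<theta>"] Suc.prems one_le_\<theta>
    by (intro add_mono mult_left_mono) auto
  also have "\<dots> = two_point_expectation \<theta> G (Suc n) c"
    by simp
  finally show ?case .
qed

lemma integral_convex_sum_eq:
  assumes G: "convex_on {0..} G" and c: "0 \<le> c"
    and two_point: "AE y in P. r y = 1/\<theta> \<or> r y = \<theta>"
  shows "(\<integral>z. G (c + (\<Sum>m<n. r (z m))) \<partial>PiM {..<n} (\<lambda>_. P)) = two_point_expectation \<theta> G n c"
  using c
proof (induction n arbitrary: c)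
  case 0
  show ?case
    using prob_space.prob_space[OF prob_space_PiM_P[where I = "{} :: nat set"]] by simp
next
  case (Suc n)
  let ?PS = "PiM {..<Suc n} (\<lambda>_. P)"
  define S where "S z = c + (\<Sum>m<n. r (z m))" for z
  have "(\<integral>z. G (c + (\<Sum>m<Suc n. r (z m))) \<partial>?PS) = (\<integral>z. G (S z + r (z n)) \<partial>?PS)"
    by (simp add: S_def add.assoc)
  also have "\<dots> = (\<integral>z. secant G (S z + 1/\<theta>) (S z + \<theta>) (S z + r (z n)) \<partial>?PS)"
  proof (rule integral_cong_AE)
    show "(\<lambda>z. G (S z + r (z n))) \<in> borel_measurable ?PS"
      using integrable_convex_sum[OF G Suc.prems, of "{..<Suc n}" "{..<Suc n}"]
      by (simp add: S_def add.assoc)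
    show "(\<lambda>z. secant G (S z + 1/\<theta>) (S z + \<theta>) (S z + r (z n))) \<in> borel_measurable ?PS"
      using integrable_secant_step[OF G Suc.prems] unfolding S_def by auto
    have "AE z in ?PS. r (z n) = 1/\<theta> \<or> r (z n) = \<theta>"
      using two_point by (intro AE_PiM_component prob_space_P) auto
    then show "AE z in ?PS. G (S z + r (z n)) = secant G (S z + 1/\<theta>) (S z + \<theta>) (S z + r (z n))"
      by eventually_elim (auto simp: secant_endpoint)
  qed
  also have "\<dots> = \<theta> / (1 + \<theta>) * (\<integral>z. G (c + 1/\<theta> + (\<Sum>m<n. r (z m))) \<partial>PiM {..<n} (\<lambda>_. P))
      + 1 / (1 + \<theta>) * (\<integral>z. G (c + \<theta> + (\<Sum>m<n. r (z m))) \<partial>PiM {..<n} (\<lambda>_. P))"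
    using integral_secant_step[OF G Suc.prems, of n] by (simp add: S_def ac_simps)
  also have "\<dots> = two_point_expectation \<theta> G (Suc n) c"
    using Suc.IH[of "c + 1/\<theta>"] Suc.IH[of "c + \<theta>"] Suc.prems one_le_\<theta> by simp
  finally show ?case .
qed

lemma PiM_component_density:
  assumes "m \<in> I" "finite I"
  shows "PiM I (\<lambda>k. if k = m then Q else P) = density (PiM I (\<lambda>_. P)) (\<lambda>z. ennreal (r (z m)))"
proof -
  define f where "f k y = (if k = m then ennreal (r y) else 1)" for k y
  have "PiM I (\<lambda>k. if k = m then Q else P) = PiM I (\<lambda>k. density P (f k))"
    by (rule PiM_cong) (auto simp: f_def[abs_def] Q_eq_density density_1)
  also have "\<dots> = density (PiM I (\<lambda>_. P)) (\<lambda>z. \<Prod>k\<in>I. f k (z k))"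
  proof (rule PiM_density[OF assms(2) P.sigma_finite_measure_axioms])
    show "f k \<in> borel_measurable P" for k
      unfolding f_def[abs_def] by measurable
    show "sigma_finite_measure (density P (f k))" for k
      using prob_space_imp_sigma_finite[OF prob_space_Q] P.sigma_finite_measure_axioms
      by (cases "k = m") (simp_all add: f_def[abs_def] Q_eq_density density_1)
  qed
  also have "(\<lambda>z. \<Prod>k\<in>I. f k (z k)) = (\<lambda>z. ennreal (r (z m)))"
    using assms by (simp add: f_def prod.delta)
  finally show ?thesis .
qed

lemma shuffle_density:
  assumes Wi: "W i = P" and Wj: "W j = Q" and n: "1 \<le> n"
  shows "Qone W i j n = density (Qzero W i n) (\<lambda>z. ennreal ((\<Sum>m<n. r (z m)) / n))"
proof -
  have "Qone W i j n = density (Qzero W i n) (\<lambda>z. (\<Sum>m<n. ennreal (r (z m))) / of_nat n)"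
    unfolding Qone_def Qzero_def Wi Wj
  proof (rule avg_measure_density[OF n])
    fix m assume "m < n"
    then show "PiM {..<n} (\<lambda>k. if k = m then Q else P) = density (PiM {..<n} (\<lambda>_. P)) (\<lambda>z. ennreal (r (z m)))"
      by (intro PiM_component_density) auto
    show "(\<lambda>z. ennreal (r (z m))) \<in> borel_measurable (PiM {..<n} (\<lambda>_. P))"
      using borel_measurable_ratio_PiM[of m "{..<n}"] \<open>m < n\<close> by simp
  qed
  also have "\<dots> = density (Qzero W i n) (\<lambda>z. ennreal ((\<Sum>m<n. r (z m)) / n))"
  proof (rule density_cong)
    show "(\<lambda>z. (\<Sum>m<n. ennreal (r (z m))) / of_nat n) \<in> borel_measurable (Qzero W i n)"
      "(\<lambda>z. ennreal ((\<Sum>m<n. r (z m)) / n)) \<in> borel_measurable (Qzero W i n)"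
      unfolding Qzero_def Wi using borel_measurable_ratio_PiM by auto
    show "AE z in Qzero W i n. (\<Sum>m<n. ennreal (r (z m))) / of_nat n = ennreal ((\<Sum>m<n. r (z m)) / n)"
    proof (rule AE_I2)
      fix z assume "z \<in> space (Qzero W i n)"
      then have nonneg: "0 \<le> r (z m)" if "m < n" for m
        using that less_imp_le[OF ratio_pos] by (auto simp: Qzero_def Wi space_PiM)
      then have "(\<Sum>m<n. ennreal (r (z m))) = ennreal (\<Sum>m<n. r (z m))"
        by (intro sum_ennreal) auto
      moreover have "0 \<le> (\<Sum>m<n. r (z m))"
        using nonneg by (intro sum_nonneg) auto
      ultimately show "(\<Sum>m<n. ennreal (r (z m))) / of_nat n = ennreal ((\<Sum>m<n. r (z m)) / n)"
        using n by (simp add: divide_ennreal ennreal_of_nat_eq_real_of_nat)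
    qed
  qed
  finally show ?thesis .
qed

lemma mean_ratio_pos:
  fixes n :: nat
  assumes "1 \<le> n" "z \<in> space (PiM {..<n} (\<lambda>_. P))"
  shows "0 < (\<Sum>m<n. r (z m)) / n"
proof -
  have "0 < real n / \<theta>"
    using assms(1) one_le_\<theta> by simp
  then show ?thesis
    using sum_ratio_bounds(1)[OF assms(2), of "{..<n}"] assms(1) by simp
qed

lemma fdiv_shuffle:
  assumes "W i = P" "W j = Q" "1 \<le> n" and g: "convex_on {0..} g"
  shows "fdiv g (Qone W i j n) (Qzero W i n) = (\<integral>z. g ((\<Sum>m<n. r (z m)) / n) \<partial>PiM {..<n} (\<lambda>_. P))"
  unfolding shuffle_density[of W i j n, OF assms(1-3)] unfolding Qzero_def assms(1)
  using mean_ratio_pos[OF assms(3)] borel_measurable_ratio_PiM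
  by (intro fdiv_density[OF prob_space_imp_sigma_finite[OF prob_space_PiM_P] _ _ g])
     (auto intro: less_imp_le)

lemma fdiv_shuffle_le:
  assumes "W i = P" "W j = Q" "1 \<le> n" and g: "convex_on {0..} g"
  shows "fdiv g (Qone W i j n) (Qzero W i n) \<le> two_point_expectation \<theta> (\<lambda>t. g (t / n)) n 0"
  using integral_convex_sum_le[OF convex_on_divide_const[OF g], of n 0] assms
  by (simp add: fdiv_shuffle)

lemma fdiv_shuffle_eq:
  assumes "W i = P" "W j = Q" "1 \<le> n" and g: "convex_on {0..} g"
    and "AE y in P. r y = 1/\<theta> \<or> r y = \<theta>"
  shows "fdiv g (Qone W i j n) (Qzero W i n) = two_point_expectation \<theta> (\<lambda>t. g (t / n)) n 0"
  using integral_convex_sum_eq[OF convex_on_divide_const[OF g], of n 0] assms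
  by (simp add: fdiv_shuffle)

lemma hockey_shuffle_swap:
  assumes "W i = P" "W j = Q" "1 \<le> n"
  shows "hockey \<alpha> (Qzero W i n) (Qone W i j n)
    = fdiv (\<lambda>t. max 0 (1 - \<alpha> * t)) (Qone W i j n) (Qzero W i n)"
  unfolding shuffle_density[of W i j n, OF assms]
  using mean_ratio_pos[OF assms(3)] borel_measurable_ratio_PiM
  by (intro hockey_density_swap) (auto simp: Qzero_def assms(1) prob_space_imp_sigma_finite[OF prob_space_PiM_P])

lemma emeasure_Q_le:
  assumes A: "A \<in> sets P"
  shows "emeasure Q A \<le> ennreal \<theta> * emeasure P A"
proof -
  have "emeasure Q A = (\<integral>\<^sup>+y. ennreal (r y) * indicator A y \<partial>P)"
    using A by (simp add: Q_eq_density emeasure_density)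
  also have "\<dots> \<le> (\<integral>\<^sup>+y. ennreal \<theta> * indicator A y \<partial>P)"
    using ratio_le by (intro nn_integral_mono) (auto simp: indicator_def ennreal_leI)
  also have "\<dots> = ennreal \<theta> * emeasure P A"
    using A by (simp add: nn_integral_cmult_indicator)
  finally show ?thesis .
qed

lemma emeasure_P_le:
  assumes A: "A \<in> sets P"
  shows "emeasure P A \<le> ennreal \<theta> * emeasure Q A"
proof -
  have "emeasure P A = (\<integral>\<^sup>+y. indicator A y \<partial>P)"
    using A by simp
  also have "\<dots> \<le> (\<integral>\<^sup>+y. ennreal \<theta> * (ennreal (r y) * indicator A y) \<partial>P)"
  proof (rule nn_integral_mono)
    fix y assume y: "y \<in> space P"
    then have "1 \<le> \<theta> * r y"
      using ratio_ge[of y] one_le_\<theta> by (simp add: field_simps)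
    moreover have "ennreal \<theta> * ennreal (r y) = ennreal (\<theta> * r y)"
      using one_le_\<theta> ratio_pos[OF y] by (simp add: ennreal_mult)
    ultimately have "1 \<le> ennreal \<theta> * ennreal (r y)"
      by simp
    then show "indicator A y \<le> ennreal \<theta> * (ennreal (r y) * indicator A y)"
      by (simp add: indicator_def)
  qed
  also have "\<dots> = ennreal \<theta> * emeasure Q A"
    using A by (simp add: nn_integral_cmult Q_eq_density emeasure_density)
  finally show ?thesis .
qed

end

lemma (in bounded_likelihood_ratio) is_LDP_two_outputs:
  assumes "exp \<epsilon> = \<theta>" and W: "\<And>k. k \<in> I \<Longrightarrow> W k = P \<or> W k = Q"
  shows "is_LDP \<epsilon> I W"
  unfolding is_LDP_def
proof (intro ballI)
  fix k l B assume k: "k \<in> I" and l: "l \<in> I" and B: "B \<in> sets (W k)"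
  then have B': "B \<in> sets P"
    using W[OF k] by (auto simp: Q_eq_density)
  have self: "emeasure M B \<le> ennreal \<theta> * emeasure M B" for M :: "'a measure"
    using mult_right_mono[of 1 "ennreal \<theta>" "emeasure M B"] one_le_\<theta> by (simp add: ennreal_leI)
  show "emeasure (W l) B \<le> ennreal (exp \<epsilon>) * emeasure (W k) B"
    using W[OF k] W[OF l] self emeasure_Q_le[OF B'] emeasure_P_le[OF B'] assms(1) by auto
qed

lemma bounded_likelihood_ratio_clip:
  assumes P: "prob_space P" and Q: "prob_space Q" and \<theta>: "1 \<le> \<theta>"
    and q [measurable]: "q \<in> borel_measurable P" and Q_eq: "Q = density P q"
    and q_le: "AE x in P. q x \<le> ennreal \<theta>" and q_ge: "AE x in P. 1 \<le> ennreal \<theta> * q x"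
  shows "bounded_likelihood_ratio P Q (\<lambda>x. max (1/\<theta>) (min \<theta> (enn2real (q x)))) \<theta>"
proof (rule bounded_likelihood_ratio.intro)
  let ?r = "\<lambda>x. max (1/\<theta>) (min \<theta> (enn2real (q x)))"
  show "Q = density P (\<lambda>x. ennreal (?r x))"
    unfolding Q_eq
  proof (rule density_cong)
    show "AE x in P. q x = ennreal (?r x)"
      using q_le q_ge
    proof eventually_elim
      case (elim x)
      then obtain t where t: "q x = ennreal t" "0 \<le> t" "t \<le> \<theta>"
        using \<theta> by (cases "q x") (auto simp: top_unique)
      moreover have "ennreal \<theta> * ennreal t = ennreal (\<theta> * t)"
        using \<theta> t(2) by (simp add: ennreal_mult)
      ultimately have "1 \<le> \<theta> * t"
        using elim(2) by simp
      then have "1/\<theta> \<le> t"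
        using \<theta> by (simp add: field_simps)
      then show ?case
        using t by simp
    qed
  qed simp_all
  show "1/\<theta> \<le> ?r y" "?r y \<le> \<theta>" for y
    using one_div_le_self[OF \<theta>] by auto
qed (use P Q \<theta> in simp_all)

lemma ex_bounded_likelihood_ratio:
  assumes P: "prob_space P" and Q: "prob_space Q" and sets_eq: "sets Q = sets P" and \<theta>: "1 \<le> \<theta>"
    and Q_le: "\<And>A. A \<in> sets P \<Longrightarrow> emeasure Q A \<le> ennreal \<theta> * emeasure P A"
    and P_le: "\<And>A. A \<in> sets P \<Longrightarrow> emeasure P A \<le> ennreal \<theta> * emeasure Q A"
  obtains r where "bounded_likelihood_ratio P Q r \<theta>"
proof -
  interpret P: prob_space P by (fact P)
  interpret Q: prob_space Q by (fact Q)
  define q where "q = RN_deriv P Q"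
  have [measurable]: "q \<in> borel_measurable P"
    by (simp add: q_def)
  have "absolutely_continuous P Q"
    unfolding absolutely_continuous_def
  proof
    fix A assume A: "A \<in> null_sets P"
    then have "A \<in> sets P" "emeasure P A = 0"
      by (auto dest: null_setsD1 null_setsD2)
    then have "emeasure Q A \<le> 0"
      using Q_le[of A] by simp
    then show "A \<in> null_sets Q"
      using A sets_eq by (auto intro!: null_setsI)
  qed
  then have Q_eq: "density P q = Q"
    unfolding q_def by (rule P.density_RN_deriv[OF _ sets_eq])
  have "AE x in P. q x \<le> ennreal \<theta>"
    using Q_le by (intro AE_density_le_const[OF P.finite_measure_axioms]) (simp_all add: Q_eq)
  moreover have "AE x in P. 1 \<le> ennreal \<theta> * q x"
    using P_le Q.finite_measure_axioms by (intro AE_const_le_density) (simp_all add: Q_eq)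
  ultimately show ?thesis
    using bounded_likelihood_ratio_clip[OF P Q \<theta> _ Q_eq[symmetric]] that by simp
qed

section \<open>Anchored laws and binary randomized response\<close>

lemma prob_space_Wrho:
  assumes \<rho>: "anchored d H \<rho>" and k: "k < d"
  shows "prob_space (Wrho d H \<rho> k)"
proof -
  interpret \<rho>: prob_space \<rho>
    using \<rho> by (simp add: anchored_def)
  have coord: "integrable \<rho> (\<lambda>x. x l)" "(\<integral>x. x l \<partial>\<rho>) = 0" if "l < d - 1" for l
    using \<rho> that by (auto simp: anchored_def)
  have int_gam: "integrable \<rho> (\<lambda>x. gam_dot d H k x)"
    unfolding gam_dot_def using coord by (intro Bochner_Integration.integrable_sum integrable_mult_right) auto
  then have int: "integrable \<rho> (\<lambda>x. 1 + gam_dot d H k x)"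
    by simp
  have "(\<integral>x. gam_dot d H k x \<partial>\<rho>) = (\<Sum>l<d-1. \<integral>x. H k l * x l \<partial>\<rho>)"
    unfolding gam_dot_def using coord by (intro Bochner_Integration.integral_sum) auto
  also have "\<dots> = 0"
    using coord by simp
  finally have "(\<integral>x. 1 + gam_dot d H k x \<partial>\<rho>) = 1"
    using int_gam by (simp add: \<rho>.prob_space)
  moreover have nonneg: "AE x in \<rho>. 0 \<le> 1 + gam_dot d H k x"
    using \<rho> k by (auto simp: anchored_def Xset_def elim: AE_mp)
  ultimately have total: "(\<integral>\<^sup>+x. ennreal (1 + gam_dot d H k x) \<partial>\<rho>) = 1"
    by (simp add: nn_integral_eq_integral[OF int nonneg])
  have "emeasure (Wrho d H \<rho> k) (space \<rho>) = (\<integral>\<^sup>+x. ennreal (1 + gam_dot d H k x) \<partial>\<rho>)"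
    unfolding Wrho_def using borel_measurable_integrable[OF int]
    by (subst emeasure_density) (auto intro!: nn_integral_cong)
  then show ?thesis
    using total by (intro prob_spaceI) (simp add: Wrho_def)
qed

lemma admissible_bounded_likelihood_ratio:
  assumes adm: "(d, \<rho>, i, j) \<in> admissible HH \<epsilon>0" and \<epsilon>0: "0 \<le> \<epsilon>0"
  obtains r where "bounded_likelihood_ratio (Wrho d (HH d) \<rho> i) (Wrho d (HH d) \<rho> j) r (exp \<epsilon>0)"
proof (rule ex_bounded_likelihood_ratio)
  let ?W = "Wrho d (HH d) \<rho>"
  have ldp: "is_LDP \<epsilon>0 {..<d} ?W" and ij: "i < d" "j < d" and \<rho>: "anchored d (HH d) \<rho>"
    using adm by (auto simp: admissible_def)
  show "prob_space (?W i)" "prob_space (?W j)"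
    using prob_space_Wrho[OF \<rho>] ij by auto
  show "sets (?W j) = sets (?W i)"
    by (simp add: Wrho_def)
  show "1 \<le> exp \<epsilon>0"
    using \<epsilon>0 by simp
  fix A assume "A \<in> sets (?W i)"
  then show "emeasure (?W j) A \<le> ennreal (exp \<epsilon>0) * emeasure (?W i) A"
    "emeasure (?W i) A \<le> ennreal (exp \<epsilon>0) * emeasure (?W j) A"
    using ldp ij by (auto simp: is_LDP_def Wrho_def)
qed

lemma bounded_likelihood_ratio_BRR:
  assumes "0 \<le> \<epsilon>0"
  shows "bounded_likelihood_ratio (BRR \<epsilon>0 0) (BRR \<epsilon>0 1) (\<lambda>b. if b then 1 / exp \<epsilon>0 else exp \<epsilon>0) (exp \<epsilon>0)"
proof -
  define \<theta> where "\<theta> = exp \<epsilon>0"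
  have \<theta>: "1 \<le> \<theta>" "0 < \<theta>" using assms by (simp_all add: \<theta>_def)
  let ?p = "\<theta> / (1 + \<theta>)" and ?q = "1 / (1 + \<theta>)"
  have pmf_eq: "pmf (bernoulli_pmf ?q) b = pmf (bernoulli_pmf ?p) b * (if b then 1 / \<theta> else \<theta>)" for b
    using \<theta> by (cases b) (simp_all add: field_simps)
  have "BRR \<epsilon>0 1 = density (count_space UNIV) (\<lambda>b. ennreal (pmf (bernoulli_pmf ?p) b) * ennreal (if b then 1 / \<theta> else \<theta>))"
    unfolding BRR_def measure_pmf_eq_density \<theta>_def[symmetric]
    using \<theta> by (simp add: pmf_eq ennreal_mult)
  also have "\<dots> = density (BRR \<epsilon>0 0) (\<lambda>b. ennreal (if b then 1 / \<theta> else \<theta>))"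
    unfolding BRR_def measure_pmf_eq_density \<theta>_def[symmetric]
    by (simp add: density_density_eq)
  finally have density: "BRR \<epsilon>0 1 = density (BRR \<epsilon>0 0) (\<lambda>b. ennreal (if b then 1 / \<theta> else \<theta>))" .
  show ?thesis
    unfolding \<theta>_def[symmetric] using one_div_le_self[OF \<theta>(1)]
    by (intro bounded_likelihood_ratio.intro[OF _ _ density]) (use \<theta> in \<open>simp_all add: BRR_def prob_space_measure_pmf\<close>)
qed

lemma valid_H_2:
  assumes "valid_H 2 H"
  shows "H 0 0 \<noteq> 0" "H 1 0 = - H 0 0"
proof -
  define u :: "nat \<Rightarrow> real" where "u i = (if i = 0 then 1 else if i = 1 then -1 else 0)" for i
  have "u \<in> {u. (\<forall>i\<ge>2. u i = 0) \<and> (\<Sum>i<2. u i) = 0}"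
    by (simp add: u_def numeral_2_eq_2)
  then obtain c where c: "u = (\<lambda>i. if i < 2 then (\<Sum>k<2-1. c k * H i k) else 0)"
    using assms unfolding valid_H_def by blast
  have c0: "c 0 * H 0 0 = 1" and c1: "c 0 * H 1 0 = -1"
    using fun_cong[OF c, of 0] fun_cong[OF c, of 1] by (simp_all add: u_def)
  then show "H 0 0 \<noteq> 0"
    by auto
  have "c 0 * (H 1 0 + H 0 0) = 0"
    using c0 c1 by (simp add: distrib_left)
  moreover have "c 0 \<noteq> 0"
    using c0 by auto
  ultimately show "H 1 0 = - H 0 0"
    by simp
qed

lemma gam_dot_2: "gam_dot 2 H k x = H k 0 * x 0"
  by (simp add: gam_dot_def)

definition two_point_law :: "real \<Rightarrow> (nat \<Rightarrow> real) measure" where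
  "two_point_law a = distr (measure_pmf (bernoulli_pmf (1/2))) (PiM {..<1} (\<lambda>_. borel))
     (\<lambda>b. restrict (\<lambda>_. if b then a else - a) {..<1})"

lemma measurable_two_point:
  "(\<lambda>b. restrict (\<lambda>_. if b then a else - a) {..<1::nat})
     \<in> measurable (measure_pmf (bernoulli_pmf (1/2))) (PiM {..<1} (\<lambda>_. borel :: real measure))"
  by (simp add: space_PiM)

lemma prob_space_two_point_law: "prob_space (two_point_law a)"
  unfolding two_point_law_def
  by (rule prob_space.prob_space_distr[OF prob_space_measure_pmf measurable_two_point])

lemma sets_two_point_law: "sets (two_point_law a) = sets (PiM {..<1} (\<lambda>_. borel :: real measure))"
  by (simp add: two_point_law_def)

lemma AE_two_point_law:
  assumes "{x \<in> space (PiM {..<1} (\<lambda>_. borel)). Q x} \<in> sets (PiM {..<1::nat} (\<lambda>_. borel :: real measure))"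
    and "\<And>b. Q (restrict (\<lambda>_. if b then a else - a) {..<1})"
  shows "AE x in two_point_law a. Q x"
  unfolding two_point_law_def using assms
  by (subst AE_distr_iff[OF measurable_two_point]) (auto intro: AE_I2)

lemma anchored_two_point_law:
  assumes a: "\<And>i. i < 2 \<Longrightarrow> \<bar>H i 0 * a\<bar> \<le> 1"
  shows "anchored 2 H (two_point_law a)"
  unfolding anchored_def
proof (intro conjI allI impI prob_space_two_point_law)
  let ?N = "PiM {..<1::nat} (\<lambda>_. borel :: real measure)"
  show "sets (two_point_law a) = sets (PiM {..<2-1} (\<lambda>_. borel :: real measure))"
    by (simp add: sets_two_point_law)
  have [measurable]: "(\<lambda>x. x 0) \<in> borel_measurable ?N"
    by (rule measurable_component_singleton) simp
  have "{x \<in> space ?N. x \<in> Xset 2 H} = {x \<in> space ?N. 0 \<le> 1 + H 0 0 * x 0 \<and> 0 \<le> 1 + H 1 0 * x 0}"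
    by (auto simp: Xset_def gam_dot_2 less_2_cases_iff)
  also have "\<dots> \<in> sets ?N"
    by measurable
  finally show "AE x in two_point_law a. x \<in> Xset 2 H"
  proof (rule AE_two_point_law)
    fix b :: bool
    have "0 \<le> 1 + H i 0 * (if b then a else - a)" if "i < 2" for i
      using a[OF that] by (cases b) (auto simp: abs_le_iff)
    then show "restrict (\<lambda>_. if b then a else - a) {..<1} \<in> Xset 2 H"
      by (simp add: Xset_def gam_dot_2 space_PiM less_2_cases_iff)
  qed
  fix l :: nat assume "l < 2 - 1"
  then have l: "l = 0" by simp
  show "integrable (two_point_law a) (\<lambda>x. x l)"
    unfolding two_point_law_def l
    by (subst integrable_distr_eq[OF measurable_two_point]) (auto intro: integrable_measure_pmf_finite)
  show "(\<integral>x. x l \<partial>two_point_law a) = 0"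
    unfolding two_point_law_def l by (subst integral_distr[OF measurable_two_point]) auto
qed

text \<open>With \<open>t = (\<theta> - 1) / (\<theta> + 1)\<close> and \<open>\<gamma>\<^sub>0\<^sup>T a = t\<close>, the atoms \<open>\<plusminus>a\<close> get the weights
  \<open>1 \<plusminus> t\<close> under \<open>W(\<cdot> | 0)\<close> and \<open>1 \<mp> t\<close> under \<open>W(\<cdot> | 1)\<close>, whose ratios are \<open>1/\<theta>\<close> and \<open>\<theta>\<close>.\<close>

lemma randomized_response_parameter:
  fixes \<theta> :: real
  assumes \<theta>: "1 \<le> \<theta>"
  defines "t \<equiv> (\<theta> - 1) / (\<theta> + 1)"
  shows "0 \<le> t" "t < 1" "(1 + t) * (1/\<theta>) = 1 - t" "(1 - t) * \<theta> = 1 + t"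
proof -
  have "1 - t = 2 / (\<theta> + 1)" "1 + t = 2 * \<theta> / (\<theta> + 1)" "0 < 2 / (\<theta> + 1)"
    using \<theta> by (simp_all add: t_def field_simps)
  then show "0 \<le> t" "t < 1" "(1 + t) * (1/\<theta>) = 1 - t" "(1 - t) * \<theta> = 1 + t"
    using \<theta> by (simp_all add: t_def)
qed

lemma two_point_law_witness:
  assumes H: "valid_H 2 H" and \<theta>: "1 \<le> \<theta>"
  defines "t \<equiv> (\<theta> - 1) / (\<theta> + 1)"
  defines "\<rho> \<equiv> two_point_law (t / H 0 0)" and "r \<equiv> \<lambda>x. if 0 \<le> gam_dot 2 H 0 x then 1/\<theta> else \<theta>"
  shows "anchored 2 H \<rho>" "bounded_likelihood_ratio (Wrho 2 H \<rho> 0) (Wrho 2 H \<rho> 1) r \<theta>"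
proof -
  note t = randomized_response_parameter[OF \<theta>, folded t_def]
  have gam: "gam_dot 2 H 0 (restrict (\<lambda>_. if b then t / H 0 0 else - (t / H 0 0)) {..<1}) = (if b then t else - t)"
    "gam_dot 2 H 1 (restrict (\<lambda>_. if b then t / H 0 0 else - (t / H 0 0)) {..<1}) = (if b then - t else t)" for b
    using valid_H_2[OF H] by (simp_all add: gam_dot_2)
  show anchored: "anchored 2 H \<rho>"
    unfolding \<rho>_def using valid_H_2[OF H] t
    by (intro anchored_two_point_law) (auto simp: less_2_cases_iff abs_mult intro!: mult_left_le)
  let ?N = "PiM {..<1::nat} (\<lambda>_. borel :: real measure)"
  have [measurable]: "(\<lambda>x. gam_dot 2 H k x) \<in> borel_measurable ?N" for k
    unfolding gam_dot_2 by measurable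
  have [measurable]: "r \<in> borel_measurable ?N"
    unfolding r_def by measurable
  have measurable_\<rho>: "measurable \<rho> M = measurable ?N M" for M :: "'b measure"
    by (rule measurable_cong_sets) (simp_all add: \<rho>_def sets_two_point_law)
  have [measurable]: "(\<lambda>x. gam_dot 2 H k x) \<in> borel_measurable \<rho>" "r \<in> borel_measurable \<rho>" for k
    unfolding measurable_\<rho> by measurable
  have "density (Wrho 2 H \<rho> 0) (\<lambda>x. ennreal (r x))
      = density \<rho> (\<lambda>x. ennreal (1 + gam_dot 2 H 0 x) * ennreal (r x))"
    unfolding Wrho_def by (rule density_density_eq) measurable
  also have "\<dots> = Wrho 2 H \<rho> 1"
    unfolding Wrho_def
  proof (rule density_cong)
    show "AE x in \<rho>. ennreal (1 + gam_dot 2 H 0 x) * ennreal (r x) = ennreal (1 + gam_dot 2 H 1 x)"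
      unfolding \<rho>_def
    proof (rule AE_two_point_law)
      fix b
      let ?x = "restrict (\<lambda>_. if b then t / H 0 0 else - (t / H 0 0)) {..<1}"
      have "(1 + gam_dot 2 H 0 ?x) * r ?x = 1 + gam_dot 2 H 1 ?x"
        using t gam[of b] by (cases b; cases "t = 0") (auto simp: r_def)
      moreover have "0 \<le> 1 + gam_dot 2 H 0 ?x" "0 \<le> r ?x"
        using t \<theta> gam[of b] by (auto simp: r_def)
      ultimately show "ennreal (1 + gam_dot 2 H 0 ?x) * ennreal (r ?x) = ennreal (1 + gam_dot 2 H 1 ?x)"
        by (simp flip: ennreal_mult)
    qed measurable
  qed measurable
  finally show "bounded_likelihood_ratio (Wrho 2 H \<rho> 0) (Wrho 2 H \<rho> 1) r \<theta>"
    using prob_space_Wrho[OF anchored] \<theta> one_div_le_self[OF \<theta>]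
    by (intro bounded_likelihood_ratio.intro) (auto simp: r_def Wrho_def)
qed

lemma admissible_two_point_witness:
  assumes H: "valid_H 2 (HH 2)" and \<epsilon>0: "0 \<le> \<epsilon>0"
  obtains \<rho> r where "(2, \<rho>, 0, 1) \<in> admissible HH \<epsilon>0"
    "bounded_likelihood_ratio (Wrho 2 (HH 2) \<rho> 0) (Wrho 2 (HH 2) \<rho> 1) r (exp \<epsilon>0)"
    "AE y in Wrho 2 (HH 2) \<rho> 0. r y = 1 / exp \<epsilon>0 \<or> r y = exp \<epsilon>0"
proof -
  let ?t = "(exp \<epsilon>0 - 1) / (exp \<epsilon>0 + 1)"
  let ?\<rho> = "two_point_law (?t / HH 2 0 0)"
  let ?r = "\<lambda>x. if 0 \<le> gam_dot 2 (HH 2) 0 x then 1 / exp \<epsilon>0 else exp \<epsilon>0"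
  have \<theta>: "1 \<le> exp \<epsilon>0"
    using \<epsilon>0 by simp
  note witness = two_point_law_witness[OF H \<theta>]
  have "is_LDP \<epsilon>0 {..<2} (Wrho 2 (HH 2) ?\<rho>)"
    by (rule bounded_likelihood_ratio.is_LDP_two_outputs[OF witness(2) refl]) (auto simp: less_2_cases_iff)
  then have "(2, ?\<rho>, 0, 1) \<in> admissible HH \<epsilon>0"
    using witness(1) by (simp add: admissible_def)
  moreover have "AE y in Wrho 2 (HH 2) ?\<rho> 0. ?r y = 1 / exp \<epsilon>0 \<or> ?r y = exp \<epsilon>0"
    by simp
  ultimately show ?thesis
    using that witness(2) by blast
qed

lemma SUP_fdiv_shuffle_eq_BRR:
  assumes H: "valid_H 2 (HH 2)" and \<epsilon>0: "0 \<le> \<epsilon>0" and n: "1 \<le> n" and f: "convex_on {0..} f"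
  shows "(SUP (d, \<rho>, i, j) \<in> admissible HH \<epsilon>0.
            ereal (fdiv f (Qone (Wrho d (HH d) \<rho>) i j n) (Qzero (Wrho d (HH d) \<rho>) i n)))
         = ereal (fdiv f (Qone (BRR \<epsilon>0) 0 1 n) (Qzero (BRR \<epsilon>0) 0 n))"
proof -
  let ?v = "two_point_expectation (exp \<epsilon>0) (\<lambda>t. f (t / n)) n 0"
  interpret BRR: bounded_likelihood_ratio "BRR \<epsilon>0 0" "BRR \<epsilon>0 1" "\<lambda>b. if b then 1 / exp \<epsilon>0 else exp \<epsilon>0" "exp \<epsilon>0"
    by (rule bounded_likelihood_ratio_BRR[OF \<epsilon>0])
  have BRR_value: "fdiv f (Qone (BRR \<epsilon>0) 0 1 n) (Qzero (BRR \<epsilon>0) 0 n) = ?v"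
    by (rule BRR.fdiv_shuffle_eq[where W = "BRR \<epsilon>0" and i = 0 and j = 1, OF refl refl n f]) simp
  obtain \<rho> r where adm: "(2, \<rho>, 0, 1) \<in> admissible HH \<epsilon>0"
    and ratio: "bounded_likelihood_ratio (Wrho 2 (HH 2) \<rho> 0) (Wrho 2 (HH 2) \<rho> 1) r (exp \<epsilon>0)"
    and two_point: "AE y in Wrho 2 (HH 2) \<rho> 0. r y = 1 / exp \<epsilon>0 \<or> r y = exp \<epsilon>0"
    by (rule admissible_two_point_witness[where HH = HH, OF H \<epsilon>0])
  have witness_value: "fdiv f (Qone (Wrho 2 (HH 2) \<rho>) 0 1 n) (Qzero (Wrho 2 (HH 2) \<rho>) 0 n) = ?v"
    by (rule bounded_likelihood_ratio.fdiv_shuffle_eq[OF ratio, where W = "Wrho 2 (HH 2) \<rho>" and i = 0 and j = 1, OF refl refl n f two_point])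
  show ?thesis
  proof (rule SUP_eqI)
    fix x assume x: "x \<in> admissible HH \<epsilon>0"
    obtain d \<rho>' i j where x_eq: "x = (d, \<rho>', i, j)"
      by (cases x) auto
    obtain r' where "bounded_likelihood_ratio (Wrho d (HH d) \<rho>' i) (Wrho d (HH d) \<rho>' j) r' (exp \<epsilon>0)"
      using admissible_bounded_likelihood_ratio[OF x[unfolded x_eq] \<epsilon>0] .
    from bounded_likelihood_ratio.fdiv_shuffle_le[OF this, where W = "Wrho d (HH d) \<rho>'" and i = i and j = j, OF refl refl n f]
    show "(case x of (d, \<rho>, i, j) \<Rightarrow> ereal (fdiv f (Qone (Wrho d (HH d) \<rho>) i j n) (Qzero (Wrho d (HH d) \<rho>) i n)))
        \<le> ereal (fdiv f (Qone (BRR \<epsilon>0) 0 1 n) (Qzero (BRR \<epsilon>0) 0 n))"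
      using BRR_value by (simp add: x_eq)
  next
    fix y assume "\<And>x. x \<in> admissible HH \<epsilon>0 \<Longrightarrow>
      (case x of (d, \<rho>, i, j) \<Rightarrow> ereal (fdiv f (Qone (Wrho d (HH d) \<rho>) i j n) (Qzero (Wrho d (HH d) \<rho>) i n))) \<le> y"
    from this[OF adm] show "ereal (fdiv f (Qone (BRR \<epsilon>0) 0 1 n) (Qzero (BRR \<epsilon>0) 0 n)) \<le> y"
      using witness_value BRR_value by simp
  qed
qed

lemma SUP_hockey_swap_shuffle_eq_BRR:
  assumes H: "valid_H 2 (HH 2)" and \<epsilon>0: "0 \<le> \<epsilon>0" and n: "1 \<le> n"
  shows "(SUP (d, \<rho>, i, j) \<in> admissible HH \<epsilon>0.
            ereal (hockey \<alpha> (Qzero (Wrho d (HH d) \<rho>) i n) (Qone (Wrho d (HH d) \<rho>) i j n)))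
         = ereal (hockey \<alpha> (Qzero (BRR \<epsilon>0) 0 n) (Qone (BRR \<epsilon>0) 0 1 n))"
proof -
  let ?f = "\<lambda>t. max 0 (1 - \<alpha> * t)"
  have "convex_on {0..} ?f"
    using convex_on_max0_affine[of "{0..}" "- \<alpha>" 1] by simp
  note SUP_fdiv = SUP_fdiv_shuffle_eq_BRR[where HH = HH, OF H \<epsilon>0 n this]
  have swap: "hockey \<alpha> (Qzero (Wrho d (HH d) \<rho>) i n) (Qone (Wrho d (HH d) \<rho>) i j n)
      = fdiv ?f (Qone (Wrho d (HH d) \<rho>) i j n) (Qzero (Wrho d (HH d) \<rho>) i n)"
    if "(d, \<rho>, i, j) \<in> admissible HH \<epsilon>0" for d \<rho> i j
    using admissible_bounded_likelihood_ratio[OF that \<epsilon>0]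
    by (metis bounded_likelihood_ratio.hockey_shuffle_swap n)
  have BRR_swap: "hockey \<alpha> (Qzero (BRR \<epsilon>0) 0 n) (Qone (BRR \<epsilon>0) 0 1 n)
      = fdiv ?f (Qone (BRR \<epsilon>0) 0 1 n) (Qzero (BRR \<epsilon>0) 0 n)"
    by (rule bounded_likelihood_ratio.hockey_shuffle_swap[OF bounded_likelihood_ratio_BRR[OF \<epsilon>0],
          where W = "BRR \<epsilon>0" and i = 0 and j = 1, OF refl refl n])
  have "(SUP (d, \<rho>, i, j) \<in> admissible HH \<epsilon>0.
            ereal (hockey \<alpha> (Qzero (Wrho d (HH d) \<rho>) i n) (Qone (Wrho d (HH d) \<rho>) i j n)))
      = (SUP (d, \<rho>, i, j) \<in> admissible HH \<epsilon>0.
            ereal (fdiv ?f (Qone (Wrho d (HH d) \<rho>) i j n) (Qzero (Wrho d (HH d) \<rho>) i n)))"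
    by (intro SUP_cong refl) (auto simp: swap)
  then show ?thesis
    unfolding BRR_swap SUP_fdiv .
qed

theorem theorem4p8:
  fixes HH :: "nat \<Rightarrow> nat \<Rightarrow> nat \<Rightarrow> real" and \<epsilon>0 :: real and n :: nat
  assumes "\<And>d. 2 \<le> d \<Longrightarrow> valid_H d (HH d)"
    and "\<epsilon>0 \<ge> 0" and "n \<ge> 1"
  shows "(\<forall>f :: real \<Rightarrow> real. convex_on {0..} f \<and> f 1 = 0 \<longrightarrow>
            (SUP (d, \<rho>, i, j) \<in> admissible HH \<epsilon>0.
               ereal (fdiv f (Qone (Wrho d (HH d) \<rho>) i j n) (Qzero (Wrho d (HH d) \<rho>) i n)))
            = ereal (fdiv f (Qone (BRR \<epsilon>0) 0 1 n) (Qzero (BRR \<epsilon>0) 0 n)))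
       \<and> (\<forall>\<alpha> :: real. \<alpha> \<ge> 1 \<longrightarrow>
            (SUP (d, \<rho>, i, j) \<in> admissible HH \<epsilon>0.
               ereal (hockey \<alpha> (Qone (Wrho d (HH d) \<rho>) i j n) (Qzero (Wrho d (HH d) \<rho>) i n)))
            = ereal (hockey \<alpha> (Qone (BRR \<epsilon>0) 0 1 n) (Qzero (BRR \<epsilon>0) 0 n))
          \<and> (SUP (d, \<rho>, i, j) \<in> admissible HH \<epsilon>0.
               ereal (hockey \<alpha> (Qzero (Wrho d (HH d) \<rho>) i n) (Qone (Wrho d (HH d) \<rho>) i j n)))
            = ereal (hockey \<alpha> (Qzero (BRR \<epsilon>0) 0 n) (Qone (BRR \<epsilon>0) 0 1 n)))"
proof -
  have H: "valid_H 2 (HH 2)"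
    using assms(1) by simp
  have hinge: "convex_on {0..} (\<lambda>t. max 0 (t - \<alpha>))" for \<alpha> :: real
    using convex_on_max0_affine[of "{0..}" 1 "- \<alpha>"] by simp
  show ?thesis
    using SUP_fdiv_shuffle_eq_BRR[where HH = HH, OF H assms(2,3)]
      SUP_fdiv_shuffle_eq_BRR[where HH = HH, OF H assms(2,3) hinge]
      SUP_hockey_swap_shuffle_eq_BRR[where HH = HH, OF H assms(2,3)]
    by (simp add: hockey_eq_fdiv)
qed

end
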